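(* Let $M$ be a known finite-horizon reward-free MDP, $\Pi\subseteq\Pi_{\mathrm{RNS}}$, $\varepsilon\in[0,1]$, $h\in[H]$, and $\mu\in\Delta(\mathcal{X}\times\mathcal{A})$ with $C_\infty\equiv C^M_{\infty;h}(\mu)$. Consider the following procedure: set $T=\varepsilon^{-1}$; for $t=1,\dots,T$, compute $\pi^{(t)}\in\Pi$ such that $$\mathbb{E}^{M,\pi^{(t)}}\Big[\frac{\mu(x_h,a_h)}{\sum_{i<t}d^{M,\pi^{(i)}}_h(x_h,a_h)+C_\infty\mu(x_h,a_h)}\Big]\ge\sup_{\pi\in\Pi}\mathbb{E}^{M,\pi}\Big[\frac{\mu(x_h,a_h)}{\sum_{i<t}d^{M,\pi^{(i)}}_h(x_h,a_h)+C_\infty\mu(x_h,a_h)}\Big]-\varepsilon_{\mathrm{opt}};$$ return $p=\mathrm{Unif}(\pi^{(1)},\dots,\pi^{(T)})$. Whenever $\varepsilon_{\mathrm{opt}}\le\varepsilon\log(2\varepsilon^{-1})$, the output $p\in\Delta(\Pi)$ satisfies $|\mathrm{supp}(p)|\le\varepsilon^{-1}$ and $$\Psi^M_{\mu;h,\varepsilon}(p)\le 3\log(2\varepsilon^{-1}),$$ and consequently $\Psi^M_{h,\varepsilon}(p)\le 6C_\infty\log(2\varepsilon^{-1})$.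
   Context: Episodic reward-free MDP $M$ (countable states $\mathcal{X}$, actions $\mathcal{A}$, horizon $H$); $\Pi_{\mathrm{RNS}}$ randomized non-stationary policies; $d^{M,\pi}_h(x,a)$ is the layer-$h$ state-action occupancy of $\pi$ in $M$, $d^{M,p}_h=\mathbb{E}_{\pi\sim p}d^{M,\pi}_h$. Definitions: $\Psi^M_{h,\varepsilon}(p)=\sup_{\pi\in\Pi}\mathbb{E}^{M,\pi}\big[\frac{d^{M,\pi}_h(x_h,a_h)}{d^{M,p}_h(x_h,a_h)+\varepsilon d^{M,\pi}_h(x_h,a_h)}\big]$; $C^M_{\infty;h}(\mu)=\sup_{\pi\in\Pi}\sup_{(x,a)}\frac{d^{M,\pi}_h(x,a)}{\mu(x,a)}$; $\Psi^M_{\mu;h,\varepsilon}(p)=\sup_{\pi\in\Pi}\mathbb{E}^{M,\pi}\big[\frac{\mu(x_h,a_h)}{d^{M,p}_h(x_h,a_h)+\varepsilon C_\infty\mu(x_h,a_h)}\big]$. *)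

theory Defs
  imports "HOL-Probability.Probability"
begin

text \<open>A known finite-horizon MDP on countable state space 'x and action space 'a.
  Layers are indexed 1..H. trans M h x a is the distribution of x_{h+1}
  given (x_h, a_h) = (x, a).\<close>
record ('x, 'a) mdp =
  init :: "'x pmf"
  trans :: "nat \<Rightarrow> 'x \<Rightarrow> 'a \<Rightarrow> 'x pmf"
  horizon :: nat

text \<open>Randomized non-stationary (Markov) policies: pi h x is the action
  distribution at layer h in state x.  The type of all such policies is Pi_RNS.\<close>
type_synonym ('x, 'a) policy = "nat \<Rightarrow> 'x \<Rightarrow> 'a pmf"

text \<open>Law of the state x_h at layer h (h >= 1); layer 0 is unused.\<close>
fun state_dist :: "('x, 'a) mdp \<Rightarrow> ('x, 'a) policy \<Rightarrow> nat \<Rightarrow> 'x pmf" where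
  "state_dist M \<pi> 0 = init M"
| "state_dist M \<pi> (Suc 0) = init M"
| "state_dist M \<pi> (Suc (Suc n)) =
     bind_pmf (state_dist M \<pi> (Suc n))
       (\<lambda>x. bind_pmf (\<pi> (Suc n) x) (\<lambda>a. trans M (Suc n) x a))"

definition occ :: "('x, 'a) mdp \<Rightarrow> ('x, 'a) policy \<Rightarrow> nat \<Rightarrow> ('x \<times> 'a) pmf" where
  "occ M \<pi> h = bind_pmf (state_dist M \<pi> h) (\<lambda>x. map_pmf (\<lambda>a. (x, a)) (\<pi> h x))"

definition occd :: "('x, 'a) mdp \<Rightarrow> ('x, 'a) policy \<Rightarrow> nat \<Rightarrow> 'x \<times> 'a \<Rightarrow> real" where
  "occd M \<pi> h xa = pmf (occ M \<pi> h) xa"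

definition occd_mix :: "('x, 'a) mdp \<Rightarrow> ('x, 'a) policy pmf \<Rightarrow> nat \<Rightarrow> 'x \<times> 'a \<Rightarrow> real" where
  "occd_mix M p h xa = measure_pmf.expectation p (\<lambda>\<pi>. occd M \<pi> h xa)"

definition expect :: "('x, 'a) mdp \<Rightarrow> ('x, 'a) policy \<Rightarrow> nat \<Rightarrow> ('x \<times> 'a \<Rightarrow> real) \<Rightarrow> real" where
  "expect M \<pi> h f = measure_pmf.expectation (occ M \<pi> h) f"

definition Psi :: "('x, 'a) mdp \<Rightarrow> ('x, 'a) policy set \<Rightarrow> nat \<Rightarrow> real \<Rightarrow> ('x, 'a) policy pmf \<Rightarrow> real" where
  "Psi M Pol h \<epsilon> p = (SUP \<pi>\<in>Pol. expect M \<pi> h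
      (\<lambda>xa. occd M \<pi> h xa / (occd_mix M p h xa + \<epsilon> * occd M \<pi> h xa)))"

text \<open>C^M_{infty;h}(mu) = sup_{pi in Pol} sup_{(x,a)} d^{M,pi}_h(x,a) / mu(x,a), valued in
  the extended reals (a positive quantity over 0 is +infinity, 0/0 = 0).\<close>
definition ratio_ereal :: "real \<Rightarrow> real \<Rightarrow> ereal" where
  "ratio_ereal a b = (if b = 0 then (if a = 0 then 0 else \<infinity>) else ereal (a / b))"

definition Cinf :: "('x, 'a) mdp \<Rightarrow> ('x, 'a) policy set \<Rightarrow> nat \<Rightarrow> ('x \<times> 'a) pmf \<Rightarrow> ereal" where
  "Cinf M Pol h \<mu> = (SUP \<pi>\<in>Pol. SUP xa. ratio_ereal (occd M \<pi> h xa) (pmf \<mu> xa))"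

text \<open>Psi^M_{mu;h,eps}(p), with C = C_infty given as a real parameter.\<close>
definition PsiMu :: "('x, 'a) mdp \<Rightarrow> ('x, 'a) policy set \<Rightarrow> nat \<Rightarrow> real \<Rightarrow> real \<Rightarrow> ('x \<times> 'a) pmf
    \<Rightarrow> ('x, 'a) policy pmf \<Rightarrow> real" where
  "PsiMu M Pol h \<epsilon> C \<mu> p = (SUP \<pi>\<in>Pol. expect M \<pi> h
      (\<lambda>xa. pmf \<mu> xa / (occd_mix M p h xa + \<epsilon> * C * pmf \<mu> xa)))"

definition unif_policies :: "(nat \<Rightarrow> ('x, 'a) policy) \<Rightarrow> nat \<Rightarrow> ('x, 'a) policy pmf" where
  "unif_policies \<pi>s T = pmf_of_multiset (mset (map \<pi>s [1..<T+1]))"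

end

theory Submission
  imports Defs
begin

text \<open>Let \<open>d_t\<close> be the occupancy of the \<open>t\<close>-th greedy policy and \<open>C = C_\<infinity>\<close>, so that
  \<open>d_t \<le> C \<mu>\<close>, and let \<open>w_t = \<mu> / (\<Sum>_{i<t} d_i + C \<mu>)\<close> be the objective of round \<open>t\<close>.
  For the uniform mixture \<open>p\<close> of the \<open>T = 1/\<epsilon>\<close> rounds, the integrand \<open>\<mu> / (d^p + \<epsilon> C \<mu>)\<close>
  of \<open>\<Psi>_\<mu>\<close> equals \<open>T w_{T+1}\<close>, and \<open>w_{T+1} \<le> w_t\<close> pointwise for every \<open>t \<le> T\<close>.
  Approximate optimality of each round therefore gives
  \<open>T E^\<pi>[w_{T+1}] \<le> \<Sum>_t E^{\<pi>_t}[w_t] + T \<epsilon>_opt\<close>. The sum equals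
  \<open>E_\<mu>[\<Sum>_t d_t / (\<Sum>_{i<t} d_i + C \<mu>)]\<close>, an elliptic potential which telescopes to at most
  \<open>2 ln (T + 1)\<close> via \<open>d / y \<le> 2 ln (1 + d / y)\<close> for \<open>0 \<le> d \<le> y\<close>; this is where \<open>d_t \<le> C \<mu>\<close>
  is needed. Finally \<open>\<Psi> \<le> C \<Psi>_\<mu>\<close> because \<open>x / (m + \<epsilon> x)\<close> is increasing in \<open>x\<close>.\<close>

lemma ln_increment_ge:
  fixes y d :: real
  assumes "0 < y" "0 \<le> d" "d \<le> y"
  shows "d / y \<le> 2 * (ln (y + d) - ln y)"
proof -
  have "ln y - ln (y + d) \<le> (y - (y + d)) / (y + d)"
    using assms by (intro ln_diff_le) auto
  then have "d / (y + d) \<le> ln (y + d) - ln y"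
    by (simp add: diff_divide_distrib)
  moreover have "d / y \<le> 2 * (d / (y + d))"
    using assms by (simp add: field_simps mult_left_mono)
  ultimately show ?thesis
    by argo
qed

lemma potential_sum_le_ln_ratio:
  fixes d :: "nat \<Rightarrow> real"
  assumes "0 < a" and "\<And>i. i \<in> {1..n} \<Longrightarrow> 0 \<le> d i \<and> d i \<le> a"
  shows "(\<Sum>t\<in>{1..n}. d t / ((\<Sum>i\<in>{1..<t}. d i) + a))
    \<le> 2 * (ln ((\<Sum>i\<in>{1..n}. d i) + a) - ln a)"
  using assms(2)
proof (induction n)
  case 0
  then show ?case by simp
next
  case (Suc n)
  define S where "S = (\<Sum>i\<in>{1..n}. d i)"
  have "0 \<le> S"
    unfolding S_def using Suc.prems by (intro sum_nonneg) auto
  moreover have "0 \<le> d (Suc n)" "d (Suc n) \<le> a"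
    using Suc.prems[of "Suc n"] by auto
  ultimately have "d (Suc n) / (S + a) \<le> 2 * (ln (S + a + d (Suc n)) - ln (S + a))"
    using assms(1) by (intro ln_increment_ge) auto
  moreover have "(\<Sum>t\<in>{1..n}. d t / ((\<Sum>i\<in>{1..<t}. d i) + a)) \<le> 2 * (ln (S + a) - ln a)"
    unfolding S_def using Suc by simp
  ultimately show ?case
    by (simp add: S_def atLeastLessThanSuc_atLeastAtMost ac_simps)
qed

lemma potential_sum_le_ln:
  fixes d :: "nat \<Rightarrow> real"
  assumes "0 < a" and "\<And>i. i \<in> {1..n} \<Longrightarrow> 0 \<le> d i \<and> d i \<le> a"
  shows "(\<Sum>t\<in>{1..n}. d t / ((\<Sum>i\<in>{1..<t}. d i) + a)) \<le> 2 * ln (real n + 1)"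
proof -
  have "(\<Sum>i\<in>{1..n}. d i) \<le> real n * a"
    using sum_bounded_above[of "{1..n}" d a] assms(2) by simp
  moreover have "0 \<le> (\<Sum>i\<in>{1..n}. d i)"
    using assms(2) by (intro sum_nonneg) auto
  ultimately have "ln ((\<Sum>i\<in>{1..n}. d i) + a) \<le> ln ((real n + 1) * a)"
    using assms(1) by (subst ln_le_cancel_iff) (auto simp: algebra_simps)
  also have "\<dots> = ln (real n + 1) + ln a"
    using assms(1) by (simp add: ln_mult)
  finally have "ln ((\<Sum>i\<in>{1..n}. d i) + a) - ln a \<le> ln (real n + 1)"
    by simp
  moreover have "(\<Sum>t\<in>{1..n}. d t / ((\<Sum>i\<in>{1..<t}. d i) + a))
      \<le> 2 * (ln ((\<Sum>i\<in>{1..n}. d i) + a) - ln a)"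
    by (rule potential_sum_le_ln_ratio) (use assms in auto)
  ultimately show ?thesis
    by argo
qed

lemma divide_add_mult_le_inverse:
  fixes S c m :: real
  assumes "0 \<le> S" "0 < c" "0 \<le> m"
  shows "m / (S + c * m) \<le> 1 / c"
proof (cases "m = 0")
  case False
  then have "c * m \<le> S + c * m" "0 < c * m"
    using assms by auto
  then have "m / (S + c * m) \<le> m / (c * m)"
    using assms by (intro divide_left_mono) auto
  then show ?thesis
    using False by simp
qed (use assms in simp)

lemma divide_add_mult_mono:
  fixes m x y e :: real
  assumes "0 \<le> m" "0 \<le> x" "x \<le> y" "0 < e"
  shows "x / (m + e * x) \<le> y / (m + e * y)"
proof (cases "x = 0")
  case False
  then have "0 < m + e * x" "0 < m + e * y"
    using assms by (auto intro: add_nonneg_pos)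
  moreover have "x * (m + e * y) \<le> y * (m + e * x)"
    using assms by (simp add: algebra_simps mult_left_mono)
  ultimately show ?thesis
    by (simp add: divide_simps)
qed (use assms in simp)

lemma expectation_measure_pmf_eq_integral_count_space:
  fixes f :: "'b \<Rightarrow> real"
  shows "measure_pmf.expectation p f = (\<integral>x. pmf p x * f x \<partial>count_space UNIV)"
  by (subst measure_pmf_eq_density, subst integral_density) auto

lemma integrable_count_space_pmf_mult:
  fixes f :: "'b \<Rightarrow> real"
  assumes "integrable (measure_pmf p) f"
  shows "integrable (count_space UNIV) (\<lambda>x. pmf p x * f x)"
proof -
  have "integrable (density (count_space UNIV) (pmf p)) f"
    using assms by (simp add: measure_pmf_eq_density)
  then show ?thesis
    by (subst (asm) integrable_density) auto
qed

lemma expectation_le_const: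
  fixes f :: "'b \<Rightarrow> real"
  assumes "0 \<le> c" "\<And>x. f x \<le> c"
  shows "measure_pmf.expectation q f \<le> c"
  using integral_mono'[of "measure_pmf q" "\<lambda>_. c" f] assms by simp

lemma sum_expectation_le_of_pointwise:
  fixes q :: "'i \<Rightarrow> 'b pmf" and g :: "'i \<Rightarrow> 'b \<Rightarrow> real"
  assumes "finite I" and "\<And>t. t \<in> I \<Longrightarrow> integrable (measure_pmf (q t)) (g t)"
    and "\<And>x. (\<Sum>t\<in>I. pmf (q t) x * g t x) \<le> pmf \<mu> x * c"
  shows "(\<Sum>t\<in>I. measure_pmf.expectation (q t) (g t)) \<le> c"
proof -
  have int: "integrable (count_space UNIV) (\<lambda>x. pmf (q t) x * g t x)" if "t \<in> I" for t
    using assms(2)[OF that] by (rule integrable_count_space_pmf_mult)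
  have "(\<Sum>t\<in>I. measure_pmf.expectation (q t) (g t))
      = (\<integral>x. (\<Sum>t\<in>I. pmf (q t) x * g t x) \<partial>count_space UNIV)"
    using int by (simp add: expectation_measure_pmf_eq_integral_count_space)
  also have "\<dots> \<le> (\<integral>x. pmf \<mu> x * c \<partial>count_space UNIV)"
    using int assms(3) by (intro integral_mono integrable_mult_left integrable_pmf) auto
  also have "\<dots> = c"
    by (simp add: integral_pmf)
  finally show ?thesis .
qed

text \<open>The objective of round \<open>t\<close> of the greedy procedure, for arbitrary distributions
  \<open>qs i\<close> in place of the occupancies \<open>d\<^sub>i\<close>.\<close>

definition cover_weight :: "real \<Rightarrow> 'b pmf \<Rightarrow> (nat \<Rightarrow> 'b pmf) \<Rightarrow> nat \<Rightarrow> 'b \<Rightarrow> real" where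
  "cover_weight C \<mu> qs t x = pmf \<mu> x / ((\<Sum>i\<in>{1..<t}. pmf (qs i) x) + C * pmf \<mu> x)"

lemma cover_weight_bounds:
  assumes "0 < C"
  shows "0 \<le> cover_weight C \<mu> qs t x" "cover_weight C \<mu> qs t x \<le> 1 / C"
  unfolding cover_weight_def using assms
  by (auto intro!: divide_add_mult_le_inverse divide_nonneg_nonneg add_nonneg_nonneg sum_nonneg)

lemma cover_weight_antimono:
  assumes "0 < C" "t \<le> s"
  shows "cover_weight C \<mu> qs s x \<le> cover_weight C \<mu> qs t x"
proof (cases "pmf \<mu> x = 0")
  case False
  then have "0 < C * pmf \<mu> x"
    using assms(1) by (simp add: order_less_le)
  moreover have "(\<Sum>i\<in>{1..<t}. pmf (qs i) x) \<le> (\<Sum>i\<in>{1..<s}. pmf (qs i) x)"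
    using assms(2) by (intro sum_mono2) auto
  moreover have "0 \<le> (\<Sum>i\<in>{1..<t}. pmf (qs i) x)"
    by (intro sum_nonneg) auto
  ultimately show ?thesis
    unfolding cover_weight_def by (intro divide_left_mono) (auto intro: mult_pos_pos)
qed (simp add: cover_weight_def)

lemma integrable_cover_weight:
  assumes "0 < C"
  shows "integrable (measure_pmf q) (cover_weight C \<mu> qs t)"
  by (intro measure_pmf.integrable_const_bound[where B = "1 / C"])
    (auto simp: abs_of_nonneg cover_weight_bounds[OF assms])

lemma expectation_cover_weight_le:
  assumes "0 < C"
  shows "measure_pmf.expectation q (cover_weight C \<mu> qs t) \<le> 1 / C"
  using assms by (intro expectation_le_const) (simp_all add: cover_weight_bounds)

lemma sum_expectation_cover_weight_le_ln:
  assumes "0 < C" and "\<And>t x. t \<in> {1..T} \<Longrightarrow> pmf (qs t) x \<le> C * pmf \<mu> x"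
  shows "(\<Sum>t\<in>{1..T}. measure_pmf.expectation (qs t) (cover_weight C \<mu> qs t))
    \<le> 2 * ln (real T + 1)"
proof (rule sum_expectation_le_of_pointwise)
  fix x
  have "(\<Sum>t\<in>{1..T}. pmf (qs t) x * cover_weight C \<mu> qs t x)
      = pmf \<mu> x * (\<Sum>t\<in>{1..T}. pmf (qs t) x / ((\<Sum>i\<in>{1..<t}. pmf (qs i) x) + C * pmf \<mu> x))"
    by (simp add: cover_weight_def sum_distrib_left mult.commute)
  also have "\<dots> \<le> pmf \<mu> x * (2 * ln (real T + 1))"
  proof (cases "pmf \<mu> x = 0")
    case False
    then have "0 < C * pmf \<mu> x"
      using assms(1) by (simp add: order_less_le)
    then show ?thesis
      using assms(2) by (intro mult_left_mono potential_sum_le_ln) auto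
  qed simp
  finally show "(\<Sum>t\<in>{1..T}. pmf (qs t) x * cover_weight C \<mu> qs t x)
      \<le> pmf \<mu> x * (2 * ln (real T + 1))" .
qed (use assms(1) in \<open>auto intro: integrable_cover_weight\<close>)

lemma greedy_cover_weight_bound:
  fixes Q :: "'b pmf set" and qs :: "nat \<Rightarrow> 'b pmf"
  assumes C: "0 < C" and dom: "\<And>q x. q \<in> Q \<Longrightarrow> pmf q x \<le> C * pmf \<mu> x"
    and greedy: "\<And>t. t \<in> {1..T} \<Longrightarrow> qs t \<in> Q \<and>
      measure_pmf.expectation (qs t) (cover_weight C \<mu> qs t)
        \<ge> (SUP q\<in>Q. measure_pmf.expectation q (cover_weight C \<mu> qs t)) - \<delta>"
    and q: "q \<in> Q"
  shows "real T * measure_pmf.expectation q (cover_weight C \<mu> qs (T + 1))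
    \<le> 2 * ln (real T + 1) + real T * \<delta>"
proof -
  have round: "measure_pmf.expectation q (cover_weight C \<mu> qs (T + 1))
      \<le> measure_pmf.expectation (qs t) (cover_weight C \<mu> qs t) + \<delta>" if t: "t \<in> {1..T}" for t
  proof -
    have "measure_pmf.expectation q (cover_weight C \<mu> qs (T + 1))
        \<le> measure_pmf.expectation q (cover_weight C \<mu> qs t)"
      using t C by (intro integral_mono integrable_cover_weight cover_weight_antimono) auto
    also have "\<dots> \<le> (SUP q\<in>Q. measure_pmf.expectation q (cover_weight C \<mu> qs t))"
      using expectation_cover_weight_le[OF C] by (intro cSUP_upper bdd_aboveI2 q) auto
    also have "\<dots> \<le> measure_pmf.expectation (qs t) (cover_weight C \<mu> qs t) + \<delta>"
      using greedy[OF t] by linarith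
    finally show ?thesis .
  qed
  have "real T * measure_pmf.expectation q (cover_weight C \<mu> qs (T + 1))
      \<le> (\<Sum>t\<in>{1..T}. measure_pmf.expectation (qs t) (cover_weight C \<mu> qs t) + \<delta>)"
    using sum_mono[of "{1..T}", OF round] by simp
  also have "\<dots> \<le> 2 * ln (real T + 1) + real T * \<delta>"
    using sum_expectation_cover_weight_le_ln[OF C, of T qs \<mu>] greedy dom
    by (simp add: sum.distrib)
  finally show ?thesis .
qed

lemma expectation_divide_add_mult_mono:
  fixes u v m :: "'b \<Rightarrow> real"
  assumes "0 < e" "\<And>x. 0 \<le> m x" "\<And>x. 0 \<le> u x" "\<And>x. u x \<le> v x"
  shows "measure_pmf.expectation q (\<lambda>x. u x / (m x + e * u x))
    \<le> measure_pmf.expectation q (\<lambda>x. v x / (m x + e * v x))"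
proof -
  have int: "integrable (measure_pmf q) (\<lambda>x. w x / (m x + e * w x))"
    if "\<And>x. 0 \<le> w x" for w :: "'b \<Rightarrow> real"
  proof (rule measure_pmf.integrable_const_bound[where B = "1 / e"])
    show "AE x in measure_pmf q. norm (w x / (m x + e * w x)) \<le> 1 / e"
      using that assms(1,2) divide_add_mult_le_inverse by (simp add: abs_of_nonneg)
  qed simp
  show ?thesis
    using assms order_trans[OF assms(3,4)]
    by (intro integral_mono int divide_add_mult_mono) auto
qed

lemma Cinf_ge_ratio:
  "\<pi> \<in> Pol \<Longrightarrow> ratio_ereal (occd M \<pi> h xa) (pmf \<mu> xa) \<le> Cinf M Pol h \<mu>"
  unfolding Cinf_def by (intro SUP_upper2[of \<pi>]) (auto intro: SUP_upper)

lemma occd_le_Cinf: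
  assumes "Cinf M Pol h \<mu> < \<infinity>" "\<pi> \<in> Pol"
  shows "occd M \<pi> h xa \<le> real_of_ereal (Cinf M Pol h \<mu>) * pmf \<mu> xa"
proof -
  define C where "C = real_of_ereal (Cinf M Pol h \<mu>)"
  have ratio: "ratio_ereal (occd M \<pi> h xa) (pmf \<mu> xa) \<le> Cinf M Pol h \<mu>"
    using assms(2) by (rule Cinf_ge_ratio)
  moreover have "0 \<le> ratio_ereal (occd M \<pi> h xa) (pmf \<mu> xa)"
    by (simp add: ratio_ereal_def occd_def)
  ultimately have C: "Cinf M Pol h \<mu> = ereal C"
    unfolding C_def using assms(1) by (cases "Cinf M Pol h \<mu>") auto
  show ?thesis
  proof (cases "pmf \<mu> xa = 0")
    case True
    then show ?thesis
      using ratio C by (auto simp: ratio_ereal_def split: if_splits)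
  next
    case False
    then have "occd M \<pi> h xa / pmf \<mu> xa \<le> C"
      using ratio C by (simp add: ratio_ereal_def)
    then show ?thesis
      using False pmf_nonneg[of \<mu> xa] by (simp add: C_def divide_le_eq)
  qed
qed

lemma Cinf_pos:
  assumes "Cinf M Pol h \<mu> < \<infinity>" "\<pi> \<in> Pol"
  shows "0 < real_of_ereal (Cinf M Pol h \<mu>)"
proof -
  obtain xa where "xa \<in> set_pmf (occ M \<pi> h)"
    by (meson ex_in_conv set_pmf_not_empty)
  then have "0 < occd M \<pi> h xa"
    by (simp add: occd_def pmf_positive)
  then have "0 < real_of_ereal (Cinf M Pol h \<mu>) * pmf \<mu> xa"
    using occd_le_Cinf[OF assms] by (rule order.strict_trans2)
  then show ?thesis
    by (simp add: zero_less_mult_iff)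
qed

lemma unif_policies_eq_map_pmf:
  assumes "0 < T"
  shows "unif_policies \<pi>s T = map_pmf \<pi>s (pmf_of_set {1..T})"
proof -
  have "unif_policies \<pi>s T = pmf_of_multiset (image_mset \<pi>s (mset_set {1..<T+1}))"
    by (simp only: unif_policies_def mset_map mset_upt)
  also have "\<dots> = map_pmf \<pi>s (pmf_of_set {1..T})"
    using assms by (simp add: map_pmf_of_set atLeastLessThanSuc_atLeastAtMost)
  finally show ?thesis .
qed

lemma set_pmf_unif_policies:
  "0 < T \<Longrightarrow> set_pmf (unif_policies \<pi>s T) = \<pi>s ` {1..T}"
  by (simp add: unif_policies_eq_map_pmf)

lemma occd_mix_unif_policies:
  "0 < T \<Longrightarrow> occd_mix M (unif_policies \<pi>s T) h xa = (\<Sum>i\<in>{1..T}. occd M (\<pi>s i) h xa) / real T"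
  by (simp add: occd_mix_def unif_policies_eq_map_pmf integral_pmf_of_set)

lemma mu_ratio_unif_policies_eq_cover_weight:
  assumes "0 < T"
  shows "pmf \<mu> xa / (occd_mix M (unif_policies \<pi>s T) h xa + 1 / real T * C * pmf \<mu> xa)
    = real T * cover_weight C \<mu> (\<lambda>i. occ M (\<pi>s i) h) (T + 1) xa"
proof -
  define S where "S = (\<Sum>i\<in>{1..T}. occd M (\<pi>s i) h xa)"
  have "occd_mix M (unif_policies \<pi>s T) h xa + 1 / real T * C * pmf \<mu> xa
      = (S + C * pmf \<mu> xa) / real T"
    using assms by (simp add: occd_mix_unif_policies S_def add_divide_distrib)
  moreover have "cover_weight C \<mu> (\<lambda>i. occ M (\<pi>s i) h) (T + 1) xa = pmf \<mu> xa / (S + C * pmf \<mu> xa)"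
    by (simp add: cover_weight_def S_def occd_def atLeastLessThanSuc_atLeastAtMost)
  ultimately show ?thesis
    by simp
qed

lemma occd_mix_nonneg: "0 \<le> occd_mix M p h xa"
  unfolding occd_mix_def occd_def by (intro integral_nonneg_AE) auto

lemma Psi_le_PsiMu:
  assumes "0 < \<epsilon>" "0 < C" "Pol \<noteq> {}"
    and dom: "\<And>\<pi> xa. \<pi> \<in> Pol \<Longrightarrow> occd M \<pi> h xa \<le> C * pmf \<mu> xa"
  shows "Psi M Pol h \<epsilon> p \<le> C * PsiMu M Pol h \<epsilon> C \<mu> p"
proof -
  define g where "g = (\<lambda>xa. pmf \<mu> xa / (occd_mix M p h xa + \<epsilon> * C * pmf \<mu> xa))"
  have "expect M \<pi> h g \<le> 1 / (\<epsilon> * C)" for \<pi>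
    unfolding expect_def g_def using assms(1,2)
    by (intro expectation_le_const) (auto intro: divide_add_mult_le_inverse occd_mix_nonneg)
  then have bdd: "bdd_above ((\<lambda>\<pi>. expect M \<pi> h g) ` Pol)"
    by (intro bdd_aboveI2) auto
  have "expect M \<pi> h (\<lambda>xa. occd M \<pi> h xa / (occd_mix M p h xa + \<epsilon> * occd M \<pi> h xa))
      \<le> C * PsiMu M Pol h \<epsilon> C \<mu> p" if \<pi>: "\<pi> \<in> Pol" for \<pi>
  proof -
    have "expect M \<pi> h (\<lambda>xa. occd M \<pi> h xa / (occd_mix M p h xa + \<epsilon> * occd M \<pi> h xa))
        \<le> expect M \<pi> h (\<lambda>xa. C * pmf \<mu> xa / (occd_mix M p h xa + \<epsilon> * (C * pmf \<mu> xa)))"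
      unfolding expect_def using assms(1) dom[OF \<pi>]
      by (intro expectation_divide_add_mult_mono occd_mix_nonneg) (auto simp: occd_def)
    also have "\<dots> = C * expect M \<pi> h g"
      by (simp add: expect_def g_def mult.assoc flip: times_divide_eq_right)
    also have "\<dots> \<le> C * PsiMu M Pol h \<epsilon> C \<mu> p"
      unfolding PsiMu_def g_def[symmetric] using assms(2) \<pi> bdd
      by (intro mult_left_mono cSUP_upper) auto
    finally show ?thesis .
  qed
  then show ?thesis
    unfolding Psi_def using assms(3) by (intro cSUP_least) auto
qed

lemma PsiMu_unif_policies_le:
  assumes "0 < T" "0 < C" and dom: "\<And>\<pi> xa. \<pi> \<in> Pol \<Longrightarrow> occd M \<pi> h xa \<le> C * pmf \<mu> xa"
    and greedy: "\<And>t. t \<in> {1..T} \<Longrightarrow> \<pi>s t \<in> Pol \<and>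
      expect M (\<pi>s t) h (\<lambda>xa. pmf \<mu> xa / ((\<Sum>i\<in>{1..<t}. occd M (\<pi>s i) h xa) + C * pmf \<mu> xa))
      \<ge> (SUP \<pi>\<in>Pol. expect M \<pi> h
          (\<lambda>xa. pmf \<mu> xa / ((\<Sum>i\<in>{1..<t}. occd M (\<pi>s i) h xa) + C * pmf \<mu> xa))) - \<delta>"
  shows "PsiMu M Pol h (1 / real T) C \<mu> (unif_policies \<pi>s T) \<le> 2 * ln (real T + 1) + real T * \<delta>"
  unfolding PsiMu_def mu_ratio_unif_policies_eq_cover_weight[OF assms(1)] expect_def
proof (rule cSUP_least)
  show "Pol \<noteq> {}"
    using greedy[of 1] assms(1) by auto
  fix \<pi> assume "\<pi> \<in> Pol"
  then have "real T * measure_pmf.expectation (occ M \<pi> h) (cover_weight C \<mu> (\<lambda>i. occ M (\<pi>s i) h) (T + 1))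
      \<le> 2 * ln (real T + 1) + real T * \<delta>"
    by (intro greedy_cover_weight_bound[where Q = "(\<lambda>\<pi>. occ M \<pi> h) ` Pol"])
      (use assms(2) dom greedy in \<open>auto simp: image_image occd_def expect_def cover_weight_def[abs_def]\<close>)
  then show "measure_pmf.expectation (occ M \<pi> h)
      (\<lambda>xa. real T * cover_weight C \<mu> (\<lambda>i. occ M (\<pi>s i) h) (T + 1) xa)
    \<le> 2 * ln (real T + 1) + real T * \<delta>"
    by simp
qed

theorem theorem4p2:
  fixes M :: "('x::countable, 'a::countable) mdp"
    and Pol :: "('x, 'a) policy set"
    and \<epsilon> \<epsilon>opt :: real
    and h T :: nat
    and \<mu> :: "('x \<times> 'a) pmf"
    and \<pi>s :: "nat \<Rightarrow> ('x, 'a) policy"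
  assumes h: "1 \<le> h" "h \<le> horizon M"
    and T: "1 \<le> T" "\<epsilon> = 1 / real T"
    and Cfin: "Cinf M Pol h \<mu> < \<infinity>"
    and opt: "\<forall>t\<in>{1..T}. \<pi>s t \<in> Pol \<and>
        expect M (\<pi>s t) h (\<lambda>xa. pmf \<mu> xa /
            ((\<Sum>i\<in>{1..<t}. occd M (\<pi>s i) h xa) + real_of_ereal (Cinf M Pol h \<mu>) * pmf \<mu> xa))
        \<ge> (SUP \<pi>\<in>Pol. expect M \<pi> h (\<lambda>xa. pmf \<mu> xa /
            ((\<Sum>i\<in>{1..<t}. occd M (\<pi>s i) h xa) + real_of_ereal (Cinf M Pol h \<mu>) * pmf \<mu> xa)))
          - \<epsilon>opt"
    and eopt: "\<epsilon>opt \<le> \<epsilon> * ln (2 / \<epsilon>)"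
  shows "set_pmf (unif_policies \<pi>s T) \<subseteq> Pol
    \<and> real (card (set_pmf (unif_policies \<pi>s T))) \<le> 1 / \<epsilon>
    \<and> PsiMu M Pol h \<epsilon> (real_of_ereal (Cinf M Pol h \<mu>)) \<mu> (unif_policies \<pi>s T) \<le> 3 * ln (2 / \<epsilon>)
    \<and> Psi M Pol h \<epsilon> (unif_policies \<pi>s T) \<le> 6 * real_of_ereal (Cinf M Pol h \<mu>) * ln (2 / \<epsilon>)"
proof -
  define C where "C = real_of_ereal (Cinf M Pol h \<mu>)"
  have T0: "0 < T" and two_div_eps: "2 / \<epsilon> = 2 * real T"
    using T by auto
  have \<pi>s_Pol: "\<pi>s ` {1..T} \<subseteq> Pol"
    using opt by auto
  then have C0: "0 < C" and Pol: "Pol \<noteq> {}"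
    unfolding C_def using Cinf_pos[OF Cfin] T0 by fastforce+
  have dom: "\<And>\<pi> xa. \<pi> \<in> Pol \<Longrightarrow> occd M \<pi> h xa \<le> C * pmf \<mu> xa"
    unfolding C_def by (rule occd_le_Cinf[OF Cfin])
  have "PsiMu M Pol h \<epsilon> C \<mu> (unif_policies \<pi>s T) \<le> 2 * ln (real T + 1) + real T * \<epsilon>opt"
    unfolding T(2) by (rule PsiMu_unif_policies_le) (use T0 C0 dom opt in \<open>auto simp: C_def\<close>)
  moreover have "real T * \<epsilon>opt \<le> ln (2 / \<epsilon>)" and "ln (real T + 1) \<le> ln (2 / \<epsilon>)"
    using eopt T0 by (auto simp: two_div_eps T(2) field_simps)
  ultimately have PsiMu: "PsiMu M Pol h \<epsilon> C \<mu> (unif_policies \<pi>s T) \<le> 3 * ln (2 / \<epsilon>)"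
    by linarith
  have "Psi M Pol h \<epsilon> (unif_policies \<pi>s T) \<le> C * PsiMu M Pol h \<epsilon> C \<mu> (unif_policies \<pi>s T)"
    by (rule Psi_le_PsiMu) (use T0 C0 Pol dom in \<open>auto simp: T(2)\<close>)
  also have "\<dots> \<le> C * (3 * ln (2 / \<epsilon>))"
    using PsiMu C0 by (intro mult_left_mono) auto
  also have "\<dots> \<le> 6 * C * ln (2 / \<epsilon>)"
    using C0 T(1) by (simp add: two_div_eps)
  finally show ?thesis
    using \<pi>s_Pol PsiMu card_image_le[of "{1..T}" \<pi>s]
    by (simp add: C_def set_pmf_unif_policies T0 T(2))
qed

end
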